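(* Let $n\ge1$ and $\alpha,\beta\in(0,1]$. The following two properties hold. (a) For all $\mathcal{C},\mathcal{C}'\in\{\bullet,\circ\}^n$ and every $\widehat{T}\in\mathcal{F}(\mathcal{C}'\to\mathcal{C})$, we have $\hat\mu(\widehat{T})=\mu(f(\widehat{T}))\,W(\mathcal{C}'\to\mathcal{C})$. (b) For every $\widehat{T}\in\widehat{\mathcal{T}}_n$, we have $\hat\mu(\pi(\widehat{T}))=\hat\mu(\widehat{T})$.
   Context: Open-boundary TASEP on $n$ sites: this is the continuous-time Markov chain on $\{\bullet,\circ\}^n$ (strings of length $n$, where $\bullet$ denotes a particle and $\circ$ a hole). Its transition rates are as follows, with $\mathcal{A},\mathcal{A}'$ arbitrary strings: - $W(\circ\mathcal{A}\to\bullet\mathcal{A})=\alpha$; - $W(\mathcal{A}\bullet\to\mathcal{A}\circ)=\beta$; - $W(\mathcal{A}\bullet\circ\mathcal{A}'\to\mathcal{A}\circ\bullet\mathcal{A}')=1$; - $W(\mathcal{C}\to\mathcal{C}')=0$ for all other pairs. A plane binary tree is a finite rooted tree in which every vertex is either an endpoint (a leaf, with no children) or has exactly two children, an ordered left child and right child. Every non-root vertex is thus either a left descendent or a right descendent of its parent. The endpoints are ordered from left to right in the planar order. $\mathcal{T}_n$ denotes the set of plane binary trees with exactly $n+2$ endpoints. The reduced configuration of $T\in\mathcal{T}_n$ is $R(T)=(t_1,\dots,t_n)\in\{\bullet,\circ\}^n$. Here $t_k=\bullet$ if the $(k+1)$-th endpoint from the left is a left child, and $t_k=\circ$ if it is a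 right child. The leftmost and rightmost endpoints are ignored. $l(T)$ (respectively $r(T)$) is the number of vertices lying strictly between the leftmost (respectively rightmost) endpoint and the root on the path joining them, excluding both the endpoint and the root. Set $\mu(T)=\alpha^{-l(T)}\beta^{-r(T)}$. A last branching vertex of a plane binary tree is a non-endpoint vertex both of whose children are endpoints. A marked tree is a pair $(T,v)$ with $T\in\mathcal{T}_n$ and $v$ a last branching vertex of $T$. The set of marked trees is $\widehat{\mathcal{T}}_n$. The map $f:\widehat{\mathcal{T}}_n\to\mathcal{T}_n$, $f(T,v)=T$, forgets the mark. For $(T,v)\in\widehat{\mathcal{T}}_n$, define $l'(T,v)$ (respectively $r'(T,v)$) as the number of vertices other than $v$ lying strictly between the leftmost (respectively rightmost) endpoint and the root. Set $\hat\mu(T,v)=\alpha^{-l'(T,v)}\beta^{-r'(T,v)}$. Definition of $\pi:\widehat{\mathcal{T}}_n\to\widehat{\mathcal{T}}_n$. Let $(T,v)\in\widehat{\mathcal{T}}_n$, and let $a$ and $b$ be the left and right children of $v$ (both endpoints). Case 1: $v$ is a right child. - Delete the endpoint $a$ together with the edge $va$. The vertex $v$ and its remaining child $b$ are merged into a single endpoint, sitting at $v$'s position; this endpoint is a right child. - If $b$ was not the rightmost endpoint of $T$, replace the first right-child endpoint to the right of this new endpoint by a new internal vertex $w$ with two new endpoint children. - If $b$ was the rightmost endpoint of $T$, replace the rightmost left-child endpoint of the reduced tree by a new internal vertex $w$ with two new endpoint children. - In either sub-case, $\pi(T,v)=(T',w)$, where $T'$ is the resulting tree and the mark is on $w$.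 Case 2: $v$ is a left child. Apply the mirror image of Case 1, exchanging left and right. - Delete $b$ and the edge $vb$, merging $v$ and $a$ into an endpoint. - If $a$ was not the leftmost endpoint of $T$, graft a cherry $w$ onto the first left-child endpoint to its left. - Otherwise, graft the cherry $w$ onto the leftmost right-child endpoint. - Mark $w$. For $\mathcal{C},\mathcal{C}'\in\{\bullet,\circ\}^n$, define $\mathcal{F}(\mathcal{C}'\to\mathcal{C}):=(R\circ f)^{-1}\{\mathcal{C}'\}\cap(R\circ f\circ\pi)^{-1}\{\mathcal{C}\}$. *)

theory Defs
  imports Complex_Main
begin

text \<open>A vertex is addressed by its path from the root:
  a list of booleans, False = go to left child, True = go to right child.
  Configurations: True = particle (bullet), False = hole (circle).\<close>

datatype ptree = Leaf | Node ptree ptree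

fun leaves :: "ptree \<Rightarrow> bool list list" where
  "leaves Leaf = [[]]"
| "leaves (Node l r) = map (Cons False) (leaves l) @ map (Cons True) (leaves r)"

fun subt :: "ptree \<Rightarrow> bool list \<Rightarrow> ptree option" where
  "subt t [] = Some t"
| "subt Leaf (_ # _) = None"
| "subt (Node l r) (b # p) = subt (if b then r else l) p"

fun replace_at :: "bool list \<Rightarrow> ptree \<Rightarrow> ptree \<Rightarrow> ptree" where
  "replace_at [] s t = s"
| "replace_at (_ # _) s Leaf = Leaf"
| "replace_at (b # p) s (Node l r) =
     (if b then Node l (replace_at p s r) else Node (replace_at p s l) r)"

definition trees :: "nat \<Rightarrow> ptree set" where
  "trees n = {T. length (leaves T) = n + 2}"

definition last_branching :: "ptree \<Rightarrow> bool list \<Rightarrow> bool" where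
  "last_branching T v \<longleftrightarrow> subt T v = Some (Node Leaf Leaf)"

definition marked :: "nat \<Rightarrow> (ptree \<times> bool list) set" where
  "marked n = {(T, v). T \<in> trees n \<and> last_branching T v}"

definition forget :: "ptree \<times> bool list \<Rightarrow> ptree" where
  "forget x = fst x"

text \<open>Reduced configuration: the (k+1)-th endpoint gives a particle iff it is a left child.\<close>
definition reduced :: "ptree \<Rightarrow> bool list" where
  "reduced T = map (\<lambda>p. \<not> last p) (butlast (tl (leaves T)))"

definition between :: "bool list \<Rightarrow> bool list set" where
  "between p = {take k p | k. 0 < k \<and> k < length p}"

definition lcount :: "ptree \<Rightarrow> nat" where
  "lcount T = card (between (hd (leaves T)))"

definition rcount :: "ptree \<Rightarrow> nat" where
  "rcount T = card (between (last (leaves T)))"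

definition mu :: "real \<Rightarrow> real \<Rightarrow> ptree \<Rightarrow> real" where
  "mu \<alpha> \<beta> T = inverse (\<alpha> ^ lcount T) * inverse (\<beta> ^ rcount T)"

definition lcount' :: "ptree \<times> bool list \<Rightarrow> nat" where
  "lcount' x = card (between (hd (leaves (fst x))) - {snd x})"

definition rcount' :: "ptree \<times> bool list \<Rightarrow> nat" where
  "rcount' x = card (between (last (leaves (fst x))) - {snd x})"

definition mu_hat :: "real \<Rightarrow> real \<Rightarrow> ptree \<times> bool list \<Rightarrow> real" where
  "mu_hat \<alpha> \<beta> x = inverse (\<alpha> ^ lcount' x) * inverse (\<beta> ^ rcount' x)"

text \<open>Transition rates of open-boundary TASEP, W(C' -> C) = W_rate alpha beta C' C.\<close>
definition W_rate :: "real \<Rightarrow> real \<Rightarrow> bool list \<Rightarrow> bool list \<Rightarrow> real" where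
  "W_rate \<alpha> \<beta> C' C =
     (if \<exists>A. C' = False # A \<and> C = True # A then \<alpha>
      else if \<exists>A. C' = A @ [True] \<and> C = A @ [False] then \<beta>
      else if \<exists>A A'. C' = A @ [True, False] @ A' \<and> C = A @ [False, True] @ A' then 1
      else 0)"

text \<open>The map pi. Deleting the cherry at v leaves all other endpoint paths unchanged,
  and v becomes an endpoint; grafting a cherry at endpoint c turns c into the
  (marked) vertex w = c.\<close>
definition pi_map :: "ptree \<times> bool list \<Rightarrow> ptree \<times> bool list" where
  "pi_map x =
     (let T = fst x; v = snd x in
      if v = [] then x else
      let T0 = replace_at v Leaf T;
          L = leaves T0;
          pre = takeWhile (\<lambda>p. p \<noteq> v) L;
          post = tl (dropWhile (\<lambda>p. p \<noteq> v) L);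
          c = (if last v then
                 (if post \<noteq> [] then hd (filter (\<lambda>p. last p) post)
                  else last (filter (\<lambda>p. \<not> last p) L))
               else
                 (if pre \<noteq> [] then last (filter (\<lambda>p. \<not> last p) pre)
                  else hd (filter (\<lambda>p. last p) L)))
      in (replace_at c (Node Leaf Leaf) T0, c))"

definition Fset :: "nat \<Rightarrow> bool list \<Rightarrow> bool list \<Rightarrow> (ptree \<times> bool list) set" where
  "Fset n C' C = {x \<in> marked n. reduced (forget x) = C' \<and> reduced (forget (pi_map x)) = C}"

end

theory Submission
  imports Defs
begin

(* Trees are handled through their endpoint lists (paths in planar order). The
   central observation is that the weight mu_hat of a marked tree (T, v) equals the
   weight of the tree obtained from T by pruning the marked cherry at v, where the
   weight of a tree only depends on the depths of its leftmost and rightmost endpoints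
   (lemma mu_hat_weight). Since pi_map prunes the cherry at v and grafts a new marked
   cherry onto an endpoint c of the pruned tree, pruning the result gives back the same
   pruned tree; this yields (b).

   For (a) we express pruning and grafting on endpoint lists (leaves_prune,
   leaves_graft), describe the choice of c made by pi_map (pi_map_right, pi_map_left),
   and compare reduced configurations and weights by pure list computations
   (transition_right, transition_left): in each of the four cases of the definition of
   pi the configurations differ by one TASEP move (a hop, an entrance or an exit) and
   the weights by the corresponding rate 1, alpha or beta. *)

abbreviation prune :: "bool list \<Rightarrow> ptree \<Rightarrow> ptree" where
  "prune v T \<equiv> replace_at v Leaf T"

abbreviation graft :: "bool list \<Rightarrow> ptree \<Rightarrow> ptree" where
  "graft c T \<equiv> replace_at c (Node Leaf Leaf) T"

lemma leaves_nonempty [simp]: "leaves T \<noteq> []"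
  by (induction T) auto

lemma first_leaf_all_left: "set (hd (leaves T)) \<subseteq> {False}"
  by (induction T) (auto simp: hd_append hd_map)

lemma last_leaf_all_right: "set (last (leaves T)) \<subseteq> {True}"
  by (induction T) (auto simp: last_append last_map)

lemma leaf_paths_nonempty: "T \<noteq> Leaf \<Longrightarrow> p \<in> set (leaves T) \<Longrightarrow> p \<noteq> []"
  by (cases T) auto

lemma first_leaf_left_child: "T \<noteq> Leaf \<Longrightarrow> \<not> last (hd (leaves T))"
  using first_leaf_all_left[of T] leaf_paths_nonempty[of T "hd (leaves T)"] leaves_nonempty[of T]
  by (auto dest: last_in_set)

lemma last_leaf_right_child: "T \<noteq> Leaf \<Longrightarrow> last (last (leaves T))"
  using last_leaf_all_right[of T] leaf_paths_nonempty[of T "last (leaves T)"] leaves_nonempty[of T]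
  by (auto dest: last_in_set)

lemma subt_leaf: "p \<in> set (leaves T) \<Longrightarrow> subt T p = Some Leaf"
  by (induction T arbitrary: p) auto

lemma distinct_leaves: "distinct (leaves T)"
  by (induction T) (auto simp: distinct_map)

lemma leaves_prefix_free:
  "p \<in> set (leaves T) \<Longrightarrow> q \<in> set (leaves T) \<Longrightarrow> take (length p) q = p \<Longrightarrow> p = q"
proof (induction T arbitrary: p q)
  case (Node l r)
  define b p' b' q' where "b = hd p" "p' = tl p" "b' = hd q" "q' = tl q"
  from Node.prems(1) have p: "p = b # p'" "p' \<in> set (leaves (if b then r else l))"
    unfolding b_p'_b'_q'_def by auto
  from Node.prems(2) have q: "q = b' # q'" "q' \<in> set (leaves (if b' then r else l))"
    unfolding b_p'_b'_q'_def by auto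
  from Node.prems(3) p q have "b' = b" "take (length p') q' = p'" by auto
  with Node.IH p q show ?case by (cases b) auto
qed simp

lemma leaves_replace_at:
  assumes "subt T p = Some s"
  shows "\<exists>P Q. leaves T = P @ map ((@) p) (leaves s) @ Q \<and>
           (\<forall>s'. leaves (replace_at p s' T) = P @ map ((@) p) (leaves s') @ Q)"
  using assms
proof (induction p arbitrary: T)
  case (Cons b p)
  then obtain l r where T: "T = Node l r" by (cases T) auto
  show ?case
  proof (cases b)
    case True
    with Cons.IH[of r] Cons.prems T obtain P Q where "leaves r = P @ map ((@) p) (leaves s) @ Q"
      "\<forall>s'. leaves (replace_at p s' r) = P @ map ((@) p) (leaves s') @ Q" by auto
    with T True show ?thesis
      by (intro exI[of _ "map (Cons False) (leaves l) @ map (Cons True) P"]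
          exI[of _ "map (Cons True) Q"]) (auto simp: comp_def)
  next
    case False
    with Cons.IH[of l] Cons.prems T obtain P Q where "leaves l = P @ map ((@) p) (leaves s) @ Q"
      "\<forall>s'. leaves (replace_at p s' l) = P @ map ((@) p) (leaves s') @ Q" by auto
    with T False show ?thesis
      by (intro exI[of _ "map (Cons False) P"]
          exI[of _ "map (Cons False) Q @ map (Cons True) (leaves r)"]) (auto simp: comp_def)
  qed
qed (intro exI[of _ "[]"], simp add: map_idI)

lemma leaves_prune:
  assumes "subt T v = Some (Node Leaf Leaf)"
  obtains P Q where "leaves T = P @ [v @ [False], v @ [True]] @ Q"
    and "leaves (prune v T) = P @ [v] @ Q"
  using leaves_replace_at[OF assms] that by fastforce

lemma leaves_graft:
  assumes L: "leaves T = P @ [c] @ Q"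
  shows "leaves (graft c T) = P @ [c @ [False], c @ [True]] @ Q"
proof -
  have "subt T c = Some Leaf" using subt_leaf[of c T] L by simp
  from leaves_replace_at[OF this] obtain P' Q' where L': "leaves T = P' @ [c] @ Q'"
    and G: "leaves (graft c T) = P' @ [c @ [False], c @ [True]] @ Q'" by auto
  have "distinct (P @ [c] @ Q)" using distinct_leaves[of T] L by simp
  then have "P = P' \<and> Q = Q'" using L L' append_Cons_eq_iff[of c P Q P' Q'] by simp
  then show ?thesis using G by simp
qed

lemma subt_graft: "subt T c \<noteq> None \<Longrightarrow> subt (graft c T) c = Some (Node Leaf Leaf)"
  by (induction c "Node Leaf Leaf" T rule: replace_at.induct) auto

lemma prune_graft: "subt T c = Some Leaf \<Longrightarrow> prune c (graft c T) = T"
  by (induction c Leaf T rule: replace_at.induct) auto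

(* The weight of a tree only depends on the depths of its extreme endpoints; we
   express it on endpoint lists, so that the transition lemmas below are pure list
   statements. *)
definition weight :: "real \<Rightarrow> real \<Rightarrow> bool list list \<Rightarrow> real" where
  "weight \<alpha> \<beta> L = inverse (\<alpha> ^ (length (hd L) - 1)) * inverse (\<beta> ^ (length (last L) - 1))"

lemma between_image: "between p = (\<lambda>k. take k p) ` {0<..<length p}"
  unfolding between_def by auto

lemma card_between: "card (between p) = length p - 1"
proof -
  have "inj_on (\<lambda>k. take k p) {0<..<length p}"
    by (rule inj_onI) (drule arg_cong[of _ _ length], auto)
  then show ?thesis by (simp add: between_image card_image)
qed

lemma between_snoc: "between (v @ [b]) - {v} = between v"
  unfolding between_def by (force simp: less_Suc_eq)

lemma leaf_not_between:
  assumes "p \<in> set (leaves T)" "q \<in> set (leaves T)"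
  shows "p \<notin> between q"
proof
  assume "p \<in> between q"
  then obtain k where k: "p = take k q" "k < length q" unfolding between_def by auto
  then have "take (length p) q = p" by simp
  with assms have "p = q" by (rule leaves_prefix_free)
  moreover have "length p = k" using k by simp
  ultimately show False using k by simp
qed

lemma mu_weight: "mu \<alpha> \<beta> T = weight \<alpha> \<beta> (leaves T)"
  by (simp add: mu_def weight_def lcount_def rcount_def card_between)

(* Removing the mark v from the vertices above an extreme endpoint h: either h
   survives pruning (and v is not above it), or h is a child of v, which becomes the
   extreme endpoint v after pruning. *)
lemma card_between_end:
  assumes "h = h0 \<and> v \<notin> between h0 \<or> (\<exists>b. h = v @ [b]) \<and> h0 = v"
  shows "card (between h - {v}) = length h0 - 1"
  using assms between_snoc by (auto simp: card_between)

lemma mu_hat_weight: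
  assumes "subt T v = Some (Node Leaf Leaf)"
  shows "mu_hat \<alpha> \<beta> (T, v) = weight \<alpha> \<beta> (leaves (prune v T))"
proof -
  obtain P Q where L: "leaves T = P @ [v @ [False], v @ [True]] @ Q"
    and L0: "leaves (prune v T) = P @ [v] @ Q"
    using leaves_prune[OF assms] .
  have "v \<in> set (leaves (prune v T))" using L0 by simp
  then have not_above: "v \<notin> between q" if "q \<in> set (leaves (prune v T))" for q
    using leaf_not_between that by blast
  have "card (between (hd (leaves T)) - {v}) = length (hd (leaves (prune v T))) - 1"
    using not_above[of "hd P"] L L0 by (intro card_between_end) (cases P, auto)
  moreover have "card (between (last (leaves T)) - {v}) = length (last (leaves (prune v T))) - 1"
    using not_above[of "last Q"] L L0 by (intro card_between_end) (cases Q rule: rev_cases, auto)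
  ultimately show ?thesis
    by (simp add: mu_hat_def weight_def lcount'_def rcount'_def)
qed

definition conf :: "bool list list \<Rightarrow> bool list" where
  "conf L = map (\<lambda>p. \<not> last p) (butlast (tl L))"

lemma reduced_conf: "reduced T = conf (leaves T)"
  by (simp add: reduced_def conf_def)

lemma conf_map: "conf L = butlast (tl (map (\<lambda>p. \<not> last p) L))"
  by (simp add: conf_def map_butlast map_tl)

lemma W_rate_hop: "W_rate \<alpha> \<beta> (X @ [True, False] @ Y) (X @ [False, True] @ Y) = 1"
proof -
  have "\<not> (\<exists>A. X @ [True, False] @ Y = False # A \<and> X @ [False, True] @ Y = True # A)"
    by (cases X) auto
  moreover have "\<not> (\<exists>A. X @ [True, False] @ Y = A @ [True] \<and> X @ [False, True] @ Y = A @ [False])"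
    by (cases Y rule: rev_cases) auto
  ultimately show ?thesis unfolding W_rate_def by auto
qed

lemma W_rate_enter: "W_rate \<alpha> \<beta> (False # A) (True # A) = \<alpha>"
  unfolding W_rate_def by auto

lemma W_rate_exit: "W_rate \<alpha> \<beta> (A @ [True]) (A @ [False]) = \<beta>"
proof -
  have "\<not> (\<exists>B. A @ [True] = False # B \<and> A @ [False] = True # B)"
    by (cases A) auto
  then show ?thesis unfolding W_rate_def by auto
qed

(* Shortening an extreme endpoint by one step multiplies the weight by alpha or beta. *)
lemma weight_shift: "x \<noteq> 0 \<Longrightarrow> m \<noteq> 0 \<Longrightarrow> inverse (x ^ (m - 1)) = inverse (x ^ m) * (x :: real)"
  by (cases m) auto

lemma map_all_left: "\<forall>p \<in> set ls. \<not> last p \<Longrightarrow> map (\<lambda>p. \<not> last p) ls = replicate (length ls) True"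
  by (induction ls) auto

lemma map_all_right: "\<forall>p \<in> set ls. last p \<Longrightarrow> map (\<lambda>p. \<not> last p) ls = replicate (length ls) False"
  by (induction ls) auto

(* The core computation when the new cherry is grafted to the right of v (onto the
   first right child after v). With L the endpoint list of the marked tree and L' that
   of the new tree, the pruned weight equals weight L times the rate of the transition
   conf L -> conf L': a particle hops right if v is a right child; if v is the leftmost
   endpoint (a left child), a particle enters and the leftmost depth drops by one. *)
lemma transition_right:
  fixes P ls rest :: "bool list list" and v c :: "bool list"
  defines "L \<equiv> P @ [v @ [False], v @ [True]] @ ls @ [c] @ rest"
    and "L' \<equiv> P @ [v] @ ls @ [c @ [False], c @ [True]] @ rest"
  assumes ls: "\<forall>p \<in> set ls. \<not> last p" and c: "last c" and v: "v \<noteq> []"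
    and first: "\<not> last (hd (P @ [v]))" and side: "last v \<or> P = []" and \<alpha>: "\<alpha> \<noteq> 0"
  shows "weight \<alpha> \<beta> (P @ [v] @ ls @ [c] @ rest) = weight \<alpha> \<beta> L * W_rate \<alpha> \<beta> (conf L) (conf L')"
proof -
  let ?g = "\<lambda>p::bool list. \<not> last p"
  define Y where "Y = replicate (length ls) True @ False # map ?g rest"
  have map_L: "map ?g L = map ?g P @ [True, False] @ Y"
    using c map_all_left[OF ls] by (simp add: L_def Y_def)
  have map_L': "map ?g L' = map ?g P @ [?g v, True] @ Y"
    using c map_all_left[OF ls] by (simp add: L'_def Y_def replicate_append_same[symmetric])
  have Y: "Y \<noteq> []" by (simp add: Y_def)
  have same_last: "last L = last (P @ [v] @ ls @ [c] @ rest)" by (simp add: L_def)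
  show ?thesis
  proof (cases "last v")
    case True
    then obtain p0 P1 where P: "P = p0 # P1" using first by (cases P) auto
    have "conf L = map ?g P1 @ [True, False] @ butlast Y"
      using Y unfolding conf_map map_L P by (simp add: butlast_append)
    moreover have "conf L' = map ?g P1 @ [False, True] @ butlast Y"
      using Y True unfolding conf_map map_L' P by (simp add: butlast_append)
    moreover have "weight \<alpha> \<beta> (P @ [v] @ ls @ [c] @ rest) = weight \<alpha> \<beta> L"
      using same_last by (simp add: weight_def L_def P)
    ultimately show ?thesis using W_rate_hop by simp
  next
    case False
    then have P: "P = []" using side by simp
    have "conf L = False # butlast Y" and "conf L' = True # butlast Y"
      using Y False unfolding conf_map map_L map_L' P by simp_all
    moreover have "weight \<alpha> \<beta> (P @ [v] @ ls @ [c] @ rest) = weight \<alpha> \<beta> L * \<alpha>"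
      using same_last weight_shift[OF \<alpha>, of "length v"] v
      by (simp add: weight_def L_def P mult_ac)
    ultimately show ?thesis using W_rate_enter by simp
  qed
qed

(* Mirror image: the cherry is grafted onto the last left child before v. Either a
   particle hops right, or v is the rightmost endpoint and a particle exits. *)
lemma transition_left:
  fixes P rs Q :: "bool list list" and v c :: "bool list"
  defines "L \<equiv> P @ [c] @ rs @ [v @ [False], v @ [True]] @ Q"
    and "L' \<equiv> P @ [c @ [False], c @ [True]] @ rs @ [v] @ Q"
  assumes rs: "\<forall>p \<in> set rs. last p" and c: "\<not> last c" and v: "v \<noteq> []"
    and final: "last (last ([v] @ Q))" and side: "\<not> last v \<or> Q = []" and \<beta>: "\<beta> \<noteq> 0"
  shows "weight \<alpha> \<beta> (P @ [c] @ rs @ [v] @ Q) = weight \<alpha> \<beta> L * W_rate \<alpha> \<beta> (conf L) (conf L')"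
proof -
  let ?g = "\<lambda>p::bool list. \<not> last p"
  define X where "X = map ?g P @ True # replicate (length rs) False"
  have map_L: "map ?g L = X @ [True, False] @ map ?g Q"
    using c map_all_right[OF rs] by (simp add: L_def X_def)
  have map_L': "map ?g L' = X @ [False, ?g v] @ map ?g Q"
    using c map_all_right[OF rs] by (simp add: L'_def X_def replicate_append_same[symmetric])
  have X: "X \<noteq> []" by (simp add: X_def)
  have same_hd: "hd L = hd (P @ [c] @ rs @ [v] @ Q)" by (cases P) (simp_all add: L_def)
  show ?thesis
  proof (cases "last v")
    case False
    then obtain Q1 q where Q: "Q = Q1 @ [q]" using final by (cases Q rule: rev_cases) auto
    have "conf L = tl X @ [True, False] @ map ?g Q1"
      using X unfolding conf_map map_L Q by (simp add: butlast_append)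
    moreover have "conf L' = tl X @ [False, True] @ map ?g Q1"
      using X False unfolding conf_map map_L' Q by (simp add: butlast_append)
    moreover have "weight \<alpha> \<beta> (P @ [c] @ rs @ [v] @ Q) = weight \<alpha> \<beta> L"
      using same_hd by (simp add: weight_def L_def Q)
    ultimately show ?thesis using W_rate_hop by simp
  next
    case True
    then have Q: "Q = []" using side by simp
    have "conf L = tl X @ [True]" and "conf L' = tl X @ [False]"
      using X True unfolding conf_map map_L map_L' Q by (simp_all add: butlast_append)
    moreover have "weight \<alpha> \<beta> (P @ [c] @ rs @ [v] @ Q) = weight \<alpha> \<beta> L * \<beta>"
      using same_hd weight_shift[OF \<beta>, of "length v"] v
      by (simp add: weight_def L_def Q mult_ac)
    ultimately show ?thesis using W_rate_exit by simp
  qed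
qed

lemma split_at_first:
  "v \<notin> set P \<Longrightarrow> takeWhile (\<lambda>p. p \<noteq> v) (P @ v # Q) = P \<and> tl (dropWhile (\<lambda>p. p \<noteq> v) (P @ v # Q)) = Q"
  by (induction P) auto

lemma pi_map_right:
  assumes v: "v \<noteq> []" and L0: "leaves (prune v T) = P @ [v] @ ls @ [c] @ rest"
    and ls: "\<forall>p \<in> set ls. \<not> last p" and c: "last c" and side: "last v \<or> P = []"
  shows "pi_map (T, v) = (graft c (prune v T), c)"
proof -
  have "v \<notin> set P" using distinct_leaves[of "prune v T"] L0 by simp
  note split_at_first[OF this, of "ls @ [c] @ rest"]
  moreover have "filter last (ls @ [c] @ rest) = c # filter last rest"
    using ls c by (simp add: filter_empty_conv)
  ultimately show ?thesis
    using v L0 side by (auto simp: pi_map_def Let_def)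
qed

lemma pi_map_left:
  assumes v: "v \<noteq> []" and L0: "leaves (prune v T) = P @ [c] @ rs @ [v] @ Q"
    and rs: "\<forall>p \<in> set rs. last p" and c: "\<not> last c" and side: "\<not> last v \<or> Q = []"
  shows "pi_map (T, v) = (graft c (prune v T), c)"
proof -
  have "v \<notin> set (P @ [c] @ rs)" using distinct_leaves[of "prune v T"] L0 by auto
  note split_at_first[OF this, of Q]
  moreover have "filter (\<lambda>p. \<not> last p) (P @ [c] @ rs) = filter (\<lambda>p. \<not> last p) P @ [c]"
    using rs c by (simp add: filter_empty_conv)
  ultimately show ?thesis
    using v L0 side by (auto simp: pi_map_def Let_def)
qed

lemma mu_hat_graft:
  assumes "c \<in> set (leaves T)"
  shows "mu_hat \<alpha> \<beta> (graft c T, c) = weight \<alpha> \<beta> (leaves T)"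
proof -
  have "subt T c = Some Leaf" using assms by (rule subt_leaf)
  then show ?thesis
    using mu_hat_weight[OF subt_graft] prune_graft by simp
qed

lemma pi_map_transition:
  assumes x: "(T, v) \<in> marked n" and n: "n \<ge> 1" and \<alpha>: "\<alpha> \<noteq> 0" and \<beta>: "\<beta> \<noteq> 0"
  obtains c where "c \<in> set (leaves (prune v T))" and "pi_map (T, v) = (graft c (prune v T), c)"
    and "weight \<alpha> \<beta> (leaves (prune v T)) =
           mu \<alpha> \<beta> T * W_rate \<alpha> \<beta> (reduced T) (reduced (graft c (prune v T)))"
proof -
  have s: "subt T v = Some (Node Leaf Leaf)" and len: "length (leaves T) = n + 2"
    using x by (simp_all add: marked_def trees_def last_branching_def)
  obtain P Q where L: "leaves T = P @ [v @ [False], v @ [True]] @ Q"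
    and L0: "leaves (prune v T) = P @ [v] @ Q"
    using leaves_prune[OF s] .
  have v: "v \<noteq> []" using s len n by (cases "v = []") auto
  have "length (leaves (prune v T)) \<ge> 2" using L L0 len n by simp
  then have "prune v T \<noteq> Leaf" by auto
  then have first: "\<not> last (hd (P @ [v] @ Q))" and final: "last (last (P @ [v] @ Q))"
    using first_leaf_left_child last_leaf_right_child L0 by metis+
  consider (right) "last v \<and> Q \<noteq> [] \<or> P = []" | (left) "P \<noteq> [] \<and> (\<not> last v \<or> Q = [])"
    by blast
  then show thesis
  proof cases
    case right
    then have "Q \<noteq> []" using first final by (cases Q) auto
    then have "\<exists>q \<in> set Q. last q" using final by (intro bexI[of _ "last Q"]) auto
    then obtain ls c rest where Q: "Q = ls @ c # rest" and c: "last c" and ls: "\<forall>p \<in> set ls. \<not> last p"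
      using split_list_first_prop[of Q last] by blast
    have side: "last v \<or> P = []" using right by auto
    have L0': "leaves (prune v T) = P @ [v] @ ls @ [c] @ rest" using L0 Q by simp
    have "leaves (graft c (prune v T)) = P @ [v] @ ls @ [c @ [False], c @ [True]] @ rest"
      using leaves_graft[of "prune v T" "P @ [v] @ ls" c rest] L0' by simp
    moreover have "\<not> last (hd (P @ [v]))" using first by (cases P) auto
    ultimately show thesis
      using that pi_map_right[OF v L0' ls c side] transition_right[OF ls c v _ side \<alpha>] L L0' Q
      by (simp add: mu_weight reduced_conf)
  next
    case left
    then have "\<exists>p \<in> set P. \<not> last p" using first by (intro bexI[of _ "hd P"]) auto
    then obtain P1 c rs where P: "P = P1 @ c # rs" and c: "\<not> last c" and rs: "\<forall>p \<in> set rs. last p"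
      using split_list_last_prop[of P "\<lambda>p. \<not> last p"] by blast
    have side: "\<not> last v \<or> Q = []" using left by auto
    have L0': "leaves (prune v T) = P1 @ [c] @ rs @ [v] @ Q" using L0 P by simp
    have "leaves (graft c (prune v T)) = P1 @ [c @ [False], c @ [True]] @ rs @ [v] @ Q"
      using leaves_graft[of "prune v T" P1 c "rs @ [v] @ Q"] L0' by simp
    moreover have "last (last ([v] @ Q))" using final by (cases Q rule: rev_cases) auto
    ultimately show thesis
      using that pi_map_left[OF v L0' rs c side] transition_left[OF rs c v _ side \<beta>] L L0' P
      by (simp add: mu_weight reduced_conf)
  qed
qed

(* (a) follows since the marked weight equals the pruned weight; (b) since pi_map
   prunes and regrafts, and both marked trees then have the same pruned tree. *)
theorem mainTheorem6:
  fixes n :: nat and \<alpha> \<beta> :: real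
  assumes "n \<ge> 1" and "0 < \<alpha>" and "\<alpha> \<le> 1" and "0 < \<beta>" and "\<beta> \<le> 1"
  shows "(\<forall>C C'. length C = n \<longrightarrow> length C' = n \<longrightarrow>
            (\<forall>x \<in> Fset n C' C. mu_hat \<alpha> \<beta> x = mu \<alpha> \<beta> (forget x) * W_rate \<alpha> \<beta> C' C))
       \<and> (\<forall>x \<in> marked n. mu_hat \<alpha> \<beta> (pi_map x) = mu_hat \<alpha> \<beta> x)"
proof -
  have nonzero: "\<alpha> \<noteq> 0" "\<beta> \<noteq> 0" using assms by auto
  have mu_hat_prune: "mu_hat \<alpha> \<beta> (T, v) = weight \<alpha> \<beta> (leaves (prune v T))"
    if "(T, v) \<in> marked n" for T v
    using that mu_hat_weight by (simp add: marked_def last_branching_def)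
  have part_a: "mu_hat \<alpha> \<beta> (T, v) = mu \<alpha> \<beta> T * W_rate \<alpha> \<beta> C' C"
    if "(T, v) \<in> Fset n C' C" for T v C C'
  proof -
    have x: "(T, v) \<in> marked n" and C': "reduced T = C'" and C: "reduced (fst (pi_map (T, v))) = C"
      using that by (simp_all add: Fset_def forget_def)
    obtain c where "c \<in> set (leaves (prune v T))" and "pi_map (T, v) = (graft c (prune v T), c)"
      and "weight \<alpha> \<beta> (leaves (prune v T)) =
             mu \<alpha> \<beta> T * W_rate \<alpha> \<beta> (reduced T) (reduced (graft c (prune v T)))"
      by (rule pi_map_transition[OF x assms(1) nonzero])
    then show ?thesis using mu_hat_prune[OF x] C C' by simp
  qed
  have part_b: "mu_hat \<alpha> \<beta> (pi_map (T, v)) = mu_hat \<alpha> \<beta> (T, v)" if x: "(T, v) \<in> marked n" for T v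
  proof -
    obtain c where "c \<in> set (leaves (prune v T))" and "pi_map (T, v) = (graft c (prune v T), c)"
      by (rule pi_map_transition[OF x assms(1) nonzero])
    then show ?thesis using mu_hat_graft mu_hat_prune[OF x] by simp
  qed
  show ?thesis
    using part_a part_b by (auto simp: forget_def)
qed

end
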